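(* For every term $t$ over $\Sigma_{md,\bot}(X)$ there exist terms $r_1,r_2$ over $\Sigma_f(X)$ such that $t=r_1\cdot r_2^{-1}$ is derivable in equational logic from $\mathsf{Md}_\bot$ and $\mathsf{VAR}(t)=\mathsf{VAR}(r_1)\cup\mathsf{VAR}(r_2)$.
   Context: $\Sigma_f$ is the signature with one sort, constants $0,1$, binary operations $+,\cdot$ and unary operation $-$; $\Sigma_{md,\bot}$ extends it with a constant $\bot$ and a unary operation $(\,\cdot\,)^{-1}$. For a signature $\Sigma$, $\Sigma(X)$ denotes terms over $\Sigma$ with variables from the set $X$, and $\mathsf{VAR}(t)$ is the set of variables occurring in $t$. $\mathsf{Md}_\bot$ is the set of equations (variables universally quantified): $(x+y)+z=x+(y+z)$; $x+y=y+x$; $x+0=x$; $x+(-x)=0\cdot x$; $(x\cdot y)\cdot z=x\cdot(y\cdot z)$; $x\cdot y=y\cdot x$; $1\cdot x=x$; $x\cdot(y+z)=x\cdot y+x\cdot z$; $-(-x)=x$; $0\cdot(x\cdot x)=0\cdot x$; $(x^{-1})^{-1}=x+0\cdot x^{-1}$; $x\cdot x^{-1}=1+0\cdot x^{-1}$; $(x\cdot y)^{-1}=x^{-1}\cdot y^{-1}$; $1^{-1}=1$; $0^{-1}=\bot$; $x+\bot=\bot$; $x\cdot\bot=\bot$. *)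

theory Defs
  imports Main
begin

datatype 'x trm =
    Var 'x
  | Zero
  | One
  | Plus "'x trm" "'x trm"
  | Times "'x trm" "'x trm"
  | Neg "'x trm"
  | Bot
  | Inv "'x trm"

fun is_field_term :: "'x trm \<Rightarrow> bool" where
  "is_field_term (Var x) = True"
| "is_field_term Zero = True"
| "is_field_term One = True"
| "is_field_term (Plus a b) = (is_field_term a \<and> is_field_term b)"
| "is_field_term (Times a b) = (is_field_term a \<and> is_field_term b)"
| "is_field_term (Neg a) = is_field_term a"
| "is_field_term Bot = False"
| "is_field_term (Inv a) = False"

fun vars :: "'x trm \<Rightarrow> 'x set" where
  "vars (Var x) = {x}"
| "vars Zero = {}"
| "vars One = {}"
| "vars (Plus a b) = vars a \<union> vars b"
| "vars (Times a b) = vars a \<union> vars b"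
| "vars (Neg a) = vars a"
| "vars Bot = {}"
| "vars (Inv a) = vars a"

text \<open>Substitution instances of the equations of Md_bot (the axiom schemes are
  stated for arbitrary terms x y z, which is the same as closing under substitution).\<close>
inductive md_axiom :: "'x trm \<Rightarrow> 'x trm \<Rightarrow> bool" where
  "md_axiom (Plus (Plus x y) z) (Plus x (Plus y z))"
| "md_axiom (Plus x y) (Plus y x)"
| "md_axiom (Plus x Zero) x"
| "md_axiom (Plus x (Neg x)) (Times Zero x)"
| "md_axiom (Times (Times x y) z) (Times x (Times y z))"
| "md_axiom (Times x y) (Times y x)"
| "md_axiom (Times One x) x"
| "md_axiom (Times x (Plus y z)) (Plus (Times x y) (Times x z))"
| "md_axiom (Neg (Neg x)) x"
| "md_axiom (Times Zero (Times x x)) (Times Zero x)"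
| "md_axiom (Inv (Inv x)) (Plus x (Times Zero (Inv x)))"
| "md_axiom (Times x (Inv x)) (Plus One (Times Zero (Inv x)))"
| "md_axiom (Inv (Times x y)) (Times (Inv x) (Inv y))"
| "md_axiom (Inv One) One"
| "md_axiom (Inv Zero) Bot"
| "md_axiom (Plus x Bot) Bot"
| "md_axiom (Times x Bot) Bot"

inductive md_eq :: "'x trm \<Rightarrow> 'x trm \<Rightarrow> bool" where
  ax: "md_axiom s t \<Longrightarrow> md_eq s t"
| refl: "md_eq t t"
| sym: "md_eq s t \<Longrightarrow> md_eq t s"
| trans: "md_eq s t \<Longrightarrow> md_eq t u \<Longrightarrow> md_eq s u"
| cong_plus: "md_eq s1 t1 \<Longrightarrow> md_eq s2 t2 \<Longrightarrow> md_eq (Plus s1 s2) (Plus t1 t2)"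
| cong_times: "md_eq s1 t1 \<Longrightarrow> md_eq s2 t2 \<Longrightarrow> md_eq (Times s1 s2) (Times t1 t2)"
| cong_neg: "md_eq s t \<Longrightarrow> md_eq (Neg s) (Neg t)"
| cong_inv: "md_eq s t \<Longrightarrow> md_eq (Inv s) (Inv t)"

end

theory Submission
  imports Defs
begin

text \<open>Every term is brought recursively into the form p \<cdot> q^-1 with inverse-free p, q:
  sums, products, negations and inverses of such fractions are again such fractions (with
  denominator q s for a sum, and q^2 / (p q) for an inverse), and \<bottom> = 1 \<cdot> 0^-1.
  The delicate point is that Md_bot gives x \<cdot> x^-1 = 1 + 0 \<cdot> x^-1 rather than 1, so
  the error terms 0 \<cdot> x must be shown to be absorbed, via 0 (x y) = 0 x + 0 y and
  x y + 0 y = x y. These laws are derived in an arbitrary model of Md_bot (a common meadow)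
  and then used in the free one, the term algebra modulo derivability.\<close>

class common_meadow = comm_monoid_add + comm_monoid_mult + comm_semiring + uminus +
  fixes meadow_inv :: "'a \<Rightarrow> 'a"
    and meadow_bot :: 'a
  assumes add_neg_self: "a + - a = 0 * a"
    and neg_neg: "- (- a) = a"
    and zero_mult_square: "0 * (a * a) = 0 * a"
    and meadow_inv_inv: "meadow_inv (meadow_inv a) = a + 0 * meadow_inv a"
    and mult_meadow_inv: "a * meadow_inv a = 1 + 0 * meadow_inv a"
    and meadow_inv_mult: "meadow_inv (a * b) = meadow_inv a * meadow_inv b"
    and meadow_inv_one: "meadow_inv 1 = 1"
    and meadow_inv_zero: "meadow_inv 0 = meadow_bot"
    and add_meadow_bot: "a + meadow_bot = meadow_bot"
    and mult_meadow_bot: "a * meadow_bot = meadow_bot"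
begin

lemma add_zero_mult_self: "a + 0 * a = a"
  using distrib_right [of 1 0 a] by simp

lemma zero_mult_add_idem: "0 * a + 0 * a = 0 * a"
  using distrib_right [of 0 0 a] by simp

lemma zero_mult_neg: "0 * (- a) = 0 * a"
proof -
  have "0 * (- a) = - a + - (- a)" by (rule add_neg_self [symmetric])
  also have "\<dots> = a + - a" by (simp add: neg_neg add.commute)
  finally show ?thesis by (simp add: add_neg_self)
qed

lemma zero_mult_zero: "0 * 0 = 0"
proof -
  have "0 * (- 1) = 0"
    using add_neg_self [of 1] add_neg_self [of "- 1"] by (simp add: neg_neg add.commute)
  then show ?thesis
    using add_neg_self [of 1] distrib_left [of 0 1 "- 1"] by simp
qed

lemma neg_mult_left: "(- a) * b = - (a * b)"
proof -
  have "(- a) * b = (- a + 0 * a) * b"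
    using add_zero_mult_self [of "- a"] by (simp add: zero_mult_neg)
  also have "\<dots> = (- a) * b + (a * b + - (a * b))"
    by (simp add: distrib_right mult.assoc add_neg_self)
  also have "\<dots> = (- a + a) * b + - (a * b)"
    by (simp add: distrib_right add.assoc)
  also have "\<dots> = 0 * (a * b) + - (a * b)"
    by (simp add: add_neg_self add.commute mult.assoc)
  also have "\<dots> = - (a * b)"
    using add_zero_mult_self [of "- (a * b)"] by (simp add: zero_mult_neg add.commute)
  finally show ?thesis .
qed

lemma zero_mult_mult: "0 * (a * b) = 0 * a + 0 * b"
proof -
  \<comment> \<open>0 b = 0 (0 b + 1), so 0 a is absorbed by 0 (a b)\<close>
  have absorb: "0 * (a * b) = 0 * (a * b) + 0 * a" for a b
  proof -
    have "0 * (0 * b + 1) = 0 * b"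
      by (simp add: distrib_left zero_mult_zero mult.assoc [symmetric])
    then have "0 * (a * b) = 0 * (a * (0 * b + 1))"
      by (metis mult.left_commute)
    also have "\<dots> = 0 * (a * b) + 0 * a"
      by (simp add: distrib_left mult.left_commute zero_mult_zero mult.assoc [symmetric])
    finally show ?thesis .
  qed
  have "0 * a + 0 * b = 0 * (a + b)"
    by (simp add: distrib_left)
  also have "\<dots> = 0 * ((a + b) * (a + b))"
    by (simp add: zero_mult_square)
  also have "\<dots> = 0 * (a * a) + 0 * (b * b) + (0 * (a * b) + 0 * (a * b))"
    by (simp add: distrib_left distrib_right ac_simps)
  also have "\<dots> = 0 * a + 0 * b + 0 * (a * b)"
    by (simp only: zero_mult_square zero_mult_add_idem)
  also have "\<dots> = 0 * (a * b)"
    using absorb [of a b] absorb [of b a] by (simp add: ac_simps)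
  finally show ?thesis ..
qed

lemma mult_add_zero_mult_right: "a * b + 0 * b = a * b"
proof -
  have "a * b + 0 * b = (a * b + (0 * a + 0 * b)) + 0 * b"
    by (simp only: zero_mult_mult [symmetric] add_zero_mult_self)
  also have "\<dots> = a * b + (0 * a + 0 * b)"
    by (simp only: add.assoc zero_mult_add_idem)
  also have "\<dots> = a * b"
    by (simp only: zero_mult_mult [symmetric] add_zero_mult_self)
  finally show ?thesis .
qed

lemma fraction_expand:
  "(p * s) * meadow_inv (q * s) = p * meadow_inv q + 0 * meadow_inv s"
proof -
  have "(p * s) * meadow_inv (q * s) = (p * meadow_inv q) * (s * meadow_inv s)"
    by (simp add: meadow_inv_mult ac_simps)
  also have "\<dots> = p * meadow_inv q + 0 * ((p * meadow_inv q) * meadow_inv s)"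
    by (simp add: mult_meadow_inv distrib_left ac_simps)
  also have "\<dots> = p * meadow_inv q + 0 * meadow_inv s"
    by (simp only: zero_mult_mult [of "p * meadow_inv q"] add.assoc [symmetric] add_zero_mult_self)
  finally show ?thesis .
qed

lemma fraction_add:
  "p * meadow_inv q + r * meadow_inv s = (p * s + r * q) * meadow_inv (q * s)"
proof -
  have "(p * s + r * q) * meadow_inv (q * s)
      = (p * s) * meadow_inv (q * s) + (r * q) * meadow_inv (s * q)"
    using distrib_right [of "p * s" "r * q" "meadow_inv (q * s)"] mult.commute [of q s]
    by simp
  also have "\<dots> = (p * meadow_inv q + 0 * meadow_inv s) + (r * meadow_inv s + 0 * meadow_inv q)"
    by (simp only: fraction_expand)
  also have "\<dots> = (p * meadow_inv q + 0 * meadow_inv q) + (r * meadow_inv s + 0 * meadow_inv s)"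
    by (simp only: ac_simps)
  finally show ?thesis
    by (simp only: mult_add_zero_mult_right)
qed

lemma fraction_mult:
  "(p * meadow_inv q) * (r * meadow_inv s) = (p * r) * meadow_inv (q * s)"
  by (simp add: meadow_inv_mult ac_simps)

lemma fraction_neg: "- (p * meadow_inv q) = (- p) * meadow_inv q"
  by (simp add: neg_mult_left)

lemma fraction_inv: "meadow_inv (p * meadow_inv q) = (q * q) * meadow_inv (p * q)"
proof -
  have "meadow_inv (p * meadow_inv q) = meadow_inv p * q + 0 * (meadow_inv p * meadow_inv q)"
    by (simp add: meadow_inv_mult meadow_inv_inv distrib_left ac_simps)
  also have "\<dots> = (meadow_inv p * q + 0 * q) + 0 * meadow_inv p + 0 * meadow_inv q"
    by (simp only: mult_add_zero_mult_right zero_mult_mult add.assoc)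
  also have "\<dots> = q * meadow_inv p + 0 * ((q * meadow_inv p) * meadow_inv q)"
    by (simp only: zero_mult_mult add.assoc mult.commute [of "meadow_inv p" q])
  also have "\<dots> = (q * meadow_inv p) * (q * meadow_inv q)"
    by (simp only: mult_meadow_inv distrib_left mult_1_right mult.left_commute [of "q * meadow_inv p" 0])
  also have "\<dots> = (q * q) * meadow_inv (p * q)"
    by (simp add: meadow_inv_mult ac_simps)
  finally show ?thesis .
qed

lemma fraction_bot: "meadow_bot = 1 * meadow_inv 0"
  by (simp add: meadow_inv_zero)

lemma fraction_self: "a = a * meadow_inv 1"
  by (simp add: meadow_inv_one)

end

lemma equivp_md_eq: "equivp md_eq"
  by (rule equivpI; auto simp: reflp_def symp_def transp_def intro: md_eq.intros)

quotient_type 'x free_meadow = "'x trm" / md_eq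
  by (rule equivp_md_eq)

instantiation free_meadow :: (type) common_meadow
begin

lift_definition zero_free_meadow :: "'x free_meadow" is Zero .
lift_definition one_free_meadow :: "'x free_meadow" is One .
lift_definition plus_free_meadow :: "'x free_meadow \<Rightarrow> 'x free_meadow \<Rightarrow> 'x free_meadow"
  is Plus by (rule md_eq.cong_plus)
lift_definition times_free_meadow :: "'x free_meadow \<Rightarrow> 'x free_meadow \<Rightarrow> 'x free_meadow"
  is Times by (rule md_eq.cong_times)
lift_definition uminus_free_meadow :: "'x free_meadow \<Rightarrow> 'x free_meadow"
  is Neg by (rule md_eq.cong_neg)
lift_definition meadow_inv_free_meadow :: "'x free_meadow \<Rightarrow> 'x free_meadow"
  is Inv by (rule md_eq.cong_inv)
lift_definition meadow_bot_free_meadow :: "'x free_meadow" is Bot .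

instance
proof
  fix a b c :: "'x free_meadow"
  show "a + b + c = a + (b + c)" "a + b = b + a" "a * b * c = a * (b * c)" "a * b = b * a"
    "1 * a = a" "a + - a = 0 * a" "- (- a) = a" "0 * (a * a) = 0 * a"
    "meadow_inv (meadow_inv a) = a + 0 * meadow_inv a"
    "a * meadow_inv a = 1 + 0 * meadow_inv a"
    "meadow_inv (a * b) = meadow_inv a * meadow_inv b"
    "meadow_inv 1 = (1 :: 'x free_meadow)" "meadow_inv 0 = (meadow_bot :: 'x free_meadow)"
    "a + meadow_bot = meadow_bot" "a * meadow_bot = meadow_bot"
    by (transfer, rule md_eq.ax, rule md_axiom.intros)+
  show "0 + a = a"
    by transfer (rule md_eq.trans [OF md_eq.ax md_eq.ax], (rule md_axiom.intros)+)
  show "(a + b) * c = a * c + b * c"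
    by transfer
      (rule md_eq.trans [OF md_eq.ax md_eq.trans [OF md_eq.ax md_eq.cong_plus]],
        (rule md_eq.ax md_axiom.intros)+)
qed

end

lemma abs_free_meadow_simps:
  "abs_free_meadow Zero = 0"
  "abs_free_meadow One = 1"
  "abs_free_meadow (Plus a b) = abs_free_meadow a + abs_free_meadow b"
  "abs_free_meadow (Times a b) = abs_free_meadow a * abs_free_meadow b"
  "abs_free_meadow (Neg a) = - abs_free_meadow a"
  "abs_free_meadow (Inv a) = meadow_inv (abs_free_meadow a)"
  "abs_free_meadow Bot = meadow_bot"
  by (simp_all add: zero_free_meadow_def one_free_meadow_def plus_free_meadow.abs_eq
      times_free_meadow.abs_eq uminus_free_meadow.abs_eq meadow_inv_free_meadow.abs_eq
      meadow_bot_free_meadow_def)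

fun numer :: "'x trm \<Rightarrow> 'x trm" and denom :: "'x trm \<Rightarrow> 'x trm" where
  "numer (Var x) = Var x"
| "numer Zero = Zero"
| "numer One = One"
| "numer (Plus a b) = Plus (Times (numer a) (denom b)) (Times (numer b) (denom a))"
| "numer (Times a b) = Times (numer a) (numer b)"
| "numer (Neg a) = Neg (numer a)"
| "numer Bot = One"
| "numer (Inv a) = Times (denom a) (denom a)"
| "denom (Var x) = One"
| "denom Zero = One"
| "denom One = One"
| "denom (Plus a b) = Times (denom a) (denom b)"
| "denom (Times a b) = Times (denom a) (denom b)"
| "denom (Neg a) = denom a"
| "denom Bot = Zero"
| "denom (Inv a) = Times (numer a) (denom a)"

lemma is_field_term_numer_denom: "is_field_term (numer t) \<and> is_field_term (denom t)"
  by (induction t) auto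

lemma vars_numer_denom: "vars (numer t) \<union> vars (denom t) = vars t"
  by (induction t) auto

lemma md_eq_numer_denom: "md_eq t (Times (numer t) (Inv (denom t)))"
proof -
  have "abs_free_meadow t = abs_free_meadow (numer t) * meadow_inv (abs_free_meadow (denom t))"
    by (induction t)
      (simp_all add: abs_free_meadow_simps fraction_add fraction_mult fraction_neg
        fraction_inv fraction_bot fraction_self [symmetric])
  then show ?thesis
    by (simp add: free_meadow.abs_eq_iff [symmetric] abs_free_meadow_simps)
qed

theorem proposition2p3:
  fixes t :: "'x trm"
  shows "\<exists>r1 r2. is_field_term r1 \<and> is_field_term r2 \<and>
           md_eq t (Times r1 (Inv r2)) \<and> vars t = vars r1 \<union> vars r2"
  using is_field_term_numer_denom md_eq_numer_denom vars_numer_denom by metis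

end
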